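(* Let $n\in\mathbb{N}$. (i) The map $\mathcal{T}_n:\mathcal{RBC}_n\to\mathcal{P}(\Theta)$ is continuous when $\mathcal{P}(\Theta)$ carries the weak topology. (ii) For every $p\in[1,\infty)$, the map $\mathcal{T}_n:\mathcal{RBC}_n\to\mathcal{P}_p(\Theta)$ is continuous when $\mathcal{P}_p(\Theta)$ carries the topology whose neighborhood basis at $G_0$ consists of sets $\{G:|\int f_i\,d(G-G_0)|<\varepsilon_i,\ i=1,\ldots,m\}$, possibly intersected with $\{G:|\int|\theta|^p\,d(G-G_0)(\theta)|<\varepsilon_0\}$, for bounded continuous $f_i$ and $\varepsilon_i>0$.
   Context: $\Theta\subseteq\mathbb{R}$ is $\mathbb{R}$, a closed half-line, or a compact interval with nonempty interior; $\mathcal{P}(\Theta)$ and $\mathcal{P}_p(\Theta)$ are Borel probability measures on $\Theta$ (resp. with finite $p$-th moment). SBA of a measure $G$ with finite mean: $\mu_{1,1}=\int\theta\,dG$; $\mu_{j,2l}=\mu_{j-1,l}$, $\mu_{j,2l-1}=b_G(\mu_{j-1,l-1},\mu_{j-1,l}]$ where $b_G(a_1,a_2]=\int_{(a_1,a_2]}\theta\,dG/(G(a_2)-G(a_1))$ (or $a_1$ if the mass is zero), $\mu_{j,0}=\inf\Theta$, $\mu_{j,2^j}=\sup\Theta$; $G$ has a regular level $n$ SBA if $\mu_{n,1},\ldots,\mu_{n,2^n-1}$ are distinct. $\mathcal{RBC}_n$ is the set of arrays $(\mu_{j,l})_{1\le j\le n+1,1\le l\le 2^j-1}$ consisting of the first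 $n+1$ rows of the SBA of some measure with a regular level $n$ SBA, with the subspace topology of Euclidean space. $\mathcal{T}_n$ maps such an array to $\sum_{l=1}^{2^n}w_{n,l}\delta_{\mu_{n+1,2l-1}}$ with $w_{n,l}=F(\mu_{n,l})-F(\mu_{n,l-1})$, where $F(\mu_{j,0})=0$, $F(\mu_{j,2^j})=1$, $F(\mu_{j,2l})=F(\mu_{j-1,l})$ and, for $1\le j\le n$, $F(\mu_{j,2l-1})=F(\mu_{j-1,l-1})+[F(\mu_{j-1,l})-F(\mu_{j-1,l-1})]\frac{\mu_{j+1,4l-1}-\mu_{j+1,4l-2}}{\mu_{j+1,4l-1}-\mu_{j+1,4l-3}}$ ($0/0=1$). *)

theory Defs
  imports "HOL-Analysis.Analysis" "HOL-Probability.Probability"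
begin

definition admissible_Theta :: "real set \<Rightarrow> bool" where
  "admissible_Theta \<Theta> \<longleftrightarrow>
     \<Theta> = UNIV \<or> (\<exists>a. \<Theta> = {a..} \<or> \<Theta> = {..a}) \<or> (\<exists>a b. a < b \<and> \<Theta> = {a..b})"

text \<open>Borel probability measures on Theta, represented as Borel probability
  measures on the real line concentrated on Theta.\<close>
definition Pr :: "real set \<Rightarrow> real measure set" where
  "Pr \<Theta> = {G. sets G = sets borel \<and> prob_space G \<and> emeasure G (UNIV - \<Theta>) = 0}"

definition Pr_p :: "real set \<Rightarrow> real \<Rightarrow> real measure set" where
  "Pr_p \<Theta> p = {G \<in> Pr \<Theta>. integrable G (\<lambda>x. \<bar>x\<bar> powr p)}"

definition cdfG :: "real measure \<Rightarrow> ereal \<Rightarrow> real" where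
  "cdfG G a = (if a = -\<infinity> then 0 else if a = \<infinity> then 1 else measure G {..real_of_ereal a})"

definition Ioc_e :: "ereal \<Rightarrow> ereal \<Rightarrow> real set" where
  "Ioc_e a1 a2 = {x. a1 < ereal x \<and> ereal x \<le> a2}"

definition bary :: "real measure \<Rightarrow> ereal \<Rightarrow> ereal \<Rightarrow> ereal" where
  "bary G a1 a2 = (if cdfG G a2 - cdfG G a1 = 0 then a1
      else ereal ((\<integral>x\<in>Ioc_e a1 a2. x \<partial>G) / (cdfG G a2 - cdfG G a1)))"

text \<open>sba G Theta j l = mu_{j,l}; entries with l > 2^j are irrelevant.\<close>
fun sba :: "real measure \<Rightarrow> real set \<Rightarrow> nat \<Rightarrow> nat \<Rightarrow> ereal" where
  "sba G \<Theta> 0 l = (if l = 0 then Inf (ereal ` \<Theta>) else Sup (ereal ` \<Theta>))"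
| "sba G \<Theta> (Suc j) l =
     (if l = 0 then Inf (ereal ` \<Theta>)
      else if l = 2 ^ Suc j then Sup (ereal ` \<Theta>)
      else if j = 0 \<and> l = 1 then ereal (\<integral>x. x \<partial>G)
      else if even l then sba G \<Theta> j (l div 2)
      else bary G (sba G \<Theta> j ((l - 1) div 2)) (sba G \<Theta> j ((l + 1) div 2)))"

definition regular_sba :: "real measure \<Rightarrow> real set \<Rightarrow> nat \<Rightarrow> bool" where
  "regular_sba G \<Theta> n \<longleftrightarrow>
     (\<forall>l1 l2. 1 \<le> l1 \<and> l1 \<le> 2 ^ n - 1 \<and> 1 \<le> l2 \<and> l2 \<le> 2 ^ n - 1 \<and> l1 \<noteq> l2
        \<longrightarrow> sba G \<Theta> n l1 \<noteq> sba G \<Theta> n l2)"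

definition idx :: "nat \<Rightarrow> nat \<times> nat \<Rightarrow> bool" where
  "idx n jl \<longleftrightarrow> 1 \<le> fst jl \<and> fst jl \<le> n + 1 \<and> 1 \<le> snd jl \<and> snd jl \<le> 2 ^ fst jl - 1"

text \<open>Arrays are real functions on nat x nat vanishing outside the index set;
  the product topology on such functions is the Euclidean topology.\<close>
definition RBC :: "nat \<Rightarrow> real set \<Rightarrow> (nat \<times> nat \<Rightarrow> real) set" where
  "RBC n \<Theta> = {A. \<exists>G \<in> Pr \<Theta>. integrable G (\<lambda>x. x) \<and> regular_sba G \<Theta> n \<and>
      (\<forall>jl. (idx n jl \<longrightarrow> ereal (A jl) = sba G \<Theta> (fst jl) (snd jl)) \<and>
            (\<not> idx n jl \<longrightarrow> A jl = 0))}"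

definition qt :: "real \<Rightarrow> real \<Rightarrow> real" where
  "qt a b = (if b = 0 \<and> a = 0 then 1 else a / b)"

text \<open>Fv A j l = F(mu_{j,l}).\<close>
fun Fv :: "(nat \<times> nat \<Rightarrow> real) \<Rightarrow> nat \<Rightarrow> nat \<Rightarrow> real" where
  "Fv A 0 l = (if l = 0 then 0 else 1)"
| "Fv A (Suc j) l =
     (if l = 0 then 0
      else if l = 2 ^ Suc j then 1
      else if even l then Fv A j (l div 2)
      else (let k = (l + 1) div 2 in
              Fv A j (k - 1) + (Fv A j k - Fv A j (k - 1)) *
                qt (A (j + 2, 4 * k - 1) - A (j + 2, 4 * k - 2))
                   (A (j + 2, 4 * k - 1) - A (j + 2, 4 * k - 3))))"

definition wts :: "nat \<Rightarrow> (nat \<times> nat \<Rightarrow> real) \<Rightarrow> nat \<Rightarrow> real" where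
  "wts n A l = Fv A n l - Fv A n (l - 1)"

definition Tn :: "nat \<Rightarrow> (nat \<times> nat \<Rightarrow> real) \<Rightarrow> real measure" where
  "Tn n A = measure_of UNIV (sets borel)
     (\<lambda>S. \<Sum>l\<in>{1..2 ^ n}. ennreal (wts n A l) * indicator S (A (n + 1, 2 * l - 1)))"

definition bcont :: "(real \<Rightarrow> real) \<Rightarrow> bool" where
  "bcont f \<longleftrightarrow> continuous_on UNIV f \<and> bounded (range f)"

definition weak_top :: "real set \<Rightarrow> real measure topology" where
  "weak_top \<Theta> = topology_generated_by
     {{G \<in> Pr \<Theta>. \<bar>(\<integral>x. f x \<partial>G) - (\<integral>x. f x \<partial>G0)\<bar> < e} | f G0 e.
        bcont f \<and> G0 \<in> Pr \<Theta> \<and> e > 0}"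

definition wass_top :: "real set \<Rightarrow> real \<Rightarrow> real measure topology" where
  "wass_top \<Theta> p = topology_generated_by
     ({{G \<in> Pr_p \<Theta> p. \<bar>(\<integral>x. f x \<partial>G) - (\<integral>x. f x \<partial>G0)\<bar> < e} | f G0 e.
        bcont f \<and> G0 \<in> Pr_p \<Theta> p \<and> e > 0} \<union>
      {{G \<in> Pr_p \<Theta> p. \<bar>(\<integral>x. \<bar>x\<bar> powr p \<partial>G) - (\<integral>x. \<bar>x\<bar> powr p \<partial>G0)\<bar> < e} | G0 e.
        G0 \<in> Pr_p \<Theta> p \<and> e > 0})"

end

theory Submission
  imports Defs
begin

text \<open>
  \<open>T\<^sub>n A\<close> is the discrete measure with atoms \<open>A (n + 1, 2 l - 1) \<in> \<Theta>\<close> and weights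
  \<open>w\<^sub>n\<^sub>,\<^sub>l \<ge> 0\<close> summing to 1, so \<open>\<integral> f d(T\<^sub>n A)\<close> is a finite weighted sum of values of \<open>f\<close>,
  and continuity of \<open>T\<^sub>n\<close> for either topology reduces to continuity of these sums in \<open>A\<close>,
  for every continuous \<open>f\<close>.
  Regularity makes the rows \<open>j \<le> n\<close> of an array in \<open>RBC\<^sub>n\<close> strictly increasing, so the
  ratios defining \<open>F(\<mu>\<^sub>j\<^sub>,\<^sub>l)\<close> for \<open>j < n\<close> have nonzero denominators and depend continuously
  on \<open>A\<close>. The ratios at level \<open>n\<close> involve row \<open>n + 1\<close>, where \<open>0/0\<close> may occur; but the two
  atoms sharing such a ratio \<open>q\<close> contribute \<open>q f(a) + (1 - q) f(c)\<close> with \<open>0 \<le> q \<le> 1\<close>, which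
  is continuous even where \<open>a\<close> and \<open>c\<close> merge.
\<close>

section \<open>Finite atomic measures\<close>

definition atomic_measure :: "'i set \<Rightarrow> ('i \<Rightarrow> real) \<Rightarrow> ('i \<Rightarrow> real) \<Rightarrow> real measure" where
  "atomic_measure I w x = distr (point_measure I (\<lambda>i. ennreal (w i))) borel x"

lemma sets_atomic_measure [simp, measurable_cong]: "sets (atomic_measure I w x) = sets borel"
  by (simp add: atomic_measure_def)

lemma emeasure_atomic_measure:
  assumes "finite I" and "S \<in> sets borel"
  shows "emeasure (atomic_measure I w x) S = (\<Sum>i\<in>I. ennreal (w i) * indicator S (x i))"
proof -
  have "emeasure (atomic_measure I w x) S =
      emeasure (point_measure I (\<lambda>i. ennreal (w i))) (I \<inter> x -` S)"
    unfolding atomic_measure_def using assms(2)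
    by (subst emeasure_distr) (auto simp: space_point_measure Int_commute)
  also have "\<dots> = (\<Sum>i\<in>I \<inter> x -` S. ennreal (w i))"
    using assms(1) by (simp add: emeasure_point_measure_finite)
  also have "\<dots> = (\<Sum>i\<in>I. ennreal (w i) * indicator S (x i))"
    using assms(1) by (simp add: sum.inter_restrict indicator_def)
  finally show ?thesis .
qed

lemma integral_atomic_measure:
  assumes "finite I" and "\<And>i. i \<in> I \<Longrightarrow> 0 \<le> w i" and "f \<in> borel_measurable borel"
  shows "(\<integral>y. f y \<partial>atomic_measure I w x) = (\<Sum>i\<in>I. w i * f (x i))"
proof -
  have "(\<integral>y. f y \<partial>atomic_measure I w x) =
      (\<integral>i. f (x i) \<partial>point_measure I (\<lambda>i. ennreal (w i)))"
    unfolding atomic_measure_def using assms(3) by (subst integral_distr) auto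
  also have "\<dots> = (\<integral>i. w i *\<^sub>R f (x i) \<partial>count_space I)"
    unfolding point_measure_def using assms(2)
    by (subst integral_density) (auto simp: AE_count_space)
  also have "\<dots> = (\<Sum>i\<in>I. w i * f (x i))"
    using assms(1) by (simp add: lebesgue_integral_count_space_finite)
  finally show ?thesis .
qed

lemma integrable_atomic_measure:
  fixes f :: "real \<Rightarrow> real"
  assumes "finite I" and "\<And>i. i \<in> I \<Longrightarrow> 0 \<le> w i" and "f \<in> borel_measurable borel"
  shows "integrable (atomic_measure I w x) f"
proof -
  have "integrable (point_measure I (\<lambda>i. ennreal (w i))) (\<lambda>i. f (x i))"
    unfolding point_measure_def using assms(1,2)
    by (subst integrable_density) (auto simp: AE_count_space integrable_count_space)
  then show ?thesis
    unfolding atomic_measure_def using assms(3) by (subst integrable_distr_eq) auto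
qed

lemma atomic_measure_in_Pr:
  assumes "finite I" and "\<And>i. i \<in> I \<Longrightarrow> 0 \<le> w i" and "(\<Sum>i\<in>I. w i) = 1"
    and "x ` I \<subseteq> \<Theta>" and "\<Theta> \<in> sets borel"
  shows "atomic_measure I w x \<in> Pr \<Theta>"
proof -
  have "emeasure (atomic_measure I w x) UNIV = ennreal (\<Sum>i\<in>I. w i)"
    using assms(1,2) by (simp add: emeasure_atomic_measure)
  then have "prob_space (atomic_measure I w x)"
    using assms(3) by (intro prob_spaceI) (simp add: atomic_measure_def)
  moreover have "emeasure (atomic_measure I w x) (UNIV - \<Theta>) = 0"
    using assms(1,4,5) by (subst emeasure_atomic_measure) (auto intro!: sum.neutral)
  ultimately show ?thesis by (simp add: Pr_def)
qed

lemma Tn_eq_atomic_measure: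
  "Tn n A = atomic_measure {1..2 ^ n} (wts n A) (\<lambda>l. A (n + 1, 2 * l - 1))"
proof -
  let ?M = "atomic_measure {1..2 ^ n} (wts n A) (\<lambda>l. A (n + 1, 2 * l - 1))"
  have "Tn n A = measure_of UNIV (sets borel) (emeasure ?M)"
    unfolding Tn_def
    by (rule measure_of_eq) (auto simp: emeasure_atomic_measure sets.sigma_sets_eq[of borel, simplified])
  also have "\<dots> = ?M"
    using measure_of_of_measure[of ?M] by (simp add: atomic_measure_def)
  finally show ?thesis .
qed

section \<open>Monotonicity of the sequential barycentric array\<close>

lemma Ioc_e_borel: "Ioc_e a1 a2 \<in> sets borel"
  unfolding Ioc_e_def by measurable

lemma cdfG_eq_measure:
  assumes "prob_space G" and "sets G = sets borel"
  shows "cdfG G a = measure G {x. ereal x \<le> a}"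
proof -
  interpret prob_space G by fact
  have space_G: "space G = UNIV"
    using assms(2) sets_eq_imp_space_eq by fastforce
  then have "prob UNIV = 1"
    using prob_space by simp
  with space_G show ?thesis
    by (cases a) (auto simp: cdfG_def atMost_def)
qed

lemma cdfG_diff_eq_measure_Ioc_e:
  assumes "prob_space G" and "sets G = sets borel" and "a1 \<le> a2"
  shows "cdfG G a2 - cdfG G a1 = measure G (Ioc_e a1 a2)"
proof -
  interpret prob_space G by fact
  have "Ioc_e a1 a2 = {x. ereal x \<le> a2} - {x. ereal x \<le> a1}"
    by (auto simp: Ioc_e_def not_le)
  moreover have "{x. ereal x \<le> a1} \<subseteq> {x. ereal x \<le> a2}"
    using assms(3) by auto
  moreover have "{x. ereal x \<le> a} \<in> sets G" for a
    using assms(2) by measurable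
  ultimately show ?thesis
    using assms by (simp add: cdfG_eq_measure finite_measure_Diff)
qed

lemma ereal_le_set_average:
  fixes G :: "real measure" and a :: ereal
  assumes "finite_measure G" and "T \<in> sets G" and "integrable G (\<lambda>x. x)" and "0 < measure G T"
    and "\<And>x. x \<in> T \<Longrightarrow> a \<le> ereal x"
  shows "a \<le> ereal ((\<integral>x\<in>T. x \<partial>G) / measure G T)"
proof (cases a)
  case (real r)
  interpret finite_measure G by fact
  have "set_integrable G T (\<lambda>x. r)"
    unfolding set_integrable_def using integrable_mult_indicator[OF assms(2) integrable_const] .
  moreover have "set_integrable G T (\<lambda>x. x)"
    unfolding set_integrable_def using integrable_mult_indicator[OF assms(2,3)] .
  ultimately have "(\<integral>x\<in>T. r \<partial>G) \<le> (\<integral>x\<in>T. x \<partial>G)"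
    by (rule set_integral_mono) (use assms(5) real in auto)
  then show ?thesis
    using real assms(2,4) by (simp add: set_integral_const pos_le_divide_eq mult.commute)
next
  case PInf
  then show ?thesis
    using assms(4,5) by (cases "T = {}") auto
qed simp

lemma set_average_le_ereal:
  fixes G :: "real measure" and b :: ereal
  assumes "finite_measure G" and "T \<in> sets G" and "integrable G (\<lambda>x. x)" and "0 < measure G T"
    and "\<And>x. x \<in> T \<Longrightarrow> ereal x \<le> b"
  shows "ereal ((\<integral>x\<in>T. x \<partial>G) / measure G T) \<le> b"
proof (cases b)
  case (real r)
  interpret finite_measure G by fact
  have "set_integrable G T (\<lambda>x. x)"
    unfolding set_integrable_def using integrable_mult_indicator[OF assms(2,3)] .
  moreover have "set_integrable G T (\<lambda>x. r)"
    unfolding set_integrable_def using integrable_mult_indicator[OF assms(2) integrable_const] .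
  ultimately have "(\<integral>x\<in>T. x \<partial>G) \<le> (\<integral>x\<in>T. r \<partial>G)"
    by (rule set_integral_mono) (use assms(5) real in auto)
  then show ?thesis
    using real assms(2,4) by (simp add: set_integral_const pos_divide_le_eq mult.commute)
next
  case MInf
  then show ?thesis
    using assms(4,5) by (cases "T = {}") auto
qed simp

lemma bary_between:
  assumes "prob_space G" and "sets G = sets borel" and "integrable G (\<lambda>x. x)" and "a1 \<le> a2"
  shows "a1 \<le> bary G a1 a2 \<and> bary G a1 a2 \<le> a2"
proof (cases "cdfG G a2 - cdfG G a1 = 0")
  case True
  then show ?thesis using assms(4) by (simp add: bary_def)
next
  case False
  interpret prob_space G by fact
  have "cdfG G a2 - cdfG G a1 = measure G (Ioc_e a1 a2)"
    by (rule cdfG_diff_eq_measure_Ioc_e[OF assms(1,2,4)])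
  with False have positive: "0 < measure G (Ioc_e a1 a2)"
    and bary_eq: "bary G a1 a2 = ereal ((\<integral>x\<in>Ioc_e a1 a2. x \<partial>G) / measure G (Ioc_e a1 a2))"
    by (auto simp: bary_def zero_less_measure_iff)
  have sets: "Ioc_e a1 a2 \<in> sets G"
    using assms(2) Ioc_e_borel by simp
  have "a1 \<le> ereal x" and "ereal x \<le> a2" if "x \<in> Ioc_e a1 a2" for x
    using that by (auto simp: Ioc_e_def)
  then show ?thesis
    unfolding bary_eq
    using ereal_le_set_average[OF finite_measure_axioms sets assms(3) positive]
      set_average_le_ereal[OF finite_measure_axioms sets assms(3) positive]
    by blast
qed

lemma admissible_Theta_mem_iff:
  assumes "admissible_Theta \<Theta>"
  shows "x \<in> \<Theta> \<longleftrightarrow> Inf (ereal ` \<Theta>) \<le> ereal x \<and> ereal x \<le> Sup (ereal ` \<Theta>)"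
proof
  assume "x \<in> \<Theta>"
  then show "Inf (ereal ` \<Theta>) \<le> ereal x \<and> ereal x \<le> Sup (ereal ` \<Theta>)"
    by (auto intro: Inf_lower Sup_upper)
next
  assume between: "Inf (ereal ` \<Theta>) \<le> ereal x \<and> ereal x \<le> Sup (ereal ` \<Theta>)"
  have lower: "a \<le> x" if "\<Theta> \<subseteq> {a..}" for a
  proof -
    have "ereal a \<le> Inf (ereal ` \<Theta>)"
      using that by (auto intro!: Inf_greatest)
    then show ?thesis using between order_trans[of "ereal a"] by force
  qed
  have upper: "x \<le> a" if "\<Theta> \<subseteq> {..a}" for a
  proof -
    have "Sup (ereal ` \<Theta>) \<le> ereal a"
      using that by (auto intro!: Sup_least)
    then show ?thesis using between order_trans[of "ereal x"] by force
  qed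
  from assms show "x \<in> \<Theta>"
    unfolding admissible_Theta_def by (elim disjE exE conjE) (auto intro!: lower upper)
qed

lemma integral_in_admissible_Theta:
  assumes "admissible_Theta \<Theta>" and "G \<in> Pr \<Theta>" and "integrable G (\<lambda>x. x)"
  shows "(\<integral>x. x \<partial>G) \<in> \<Theta>"
proof -
  interpret prob_space G
    using assms(2) by (simp add: Pr_def)
  have "sets G = sets borel" and "emeasure G (UNIV - \<Theta>) = 0"
    using assms(2) by (auto simp: Pr_def)
  moreover have "\<Theta> \<in> sets borel"
    using assms(1) by (auto simp: admissible_Theta_def)
  ultimately have AE_Theta: "AE x in G. x \<in> \<Theta>"
    using sets_eq_imp_space_eq[of G borel] by (subst AE_iff_measurable[of "UNIV - \<Theta>"]) auto
  have lower: "a \<le> (\<integral>x. x \<partial>G)" if "\<Theta> \<subseteq> {a..}" for a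
  proof -
    have "(\<integral>x. a \<partial>G) \<le> (\<integral>x. x \<partial>G)"
      by (rule integral_mono_AE[OF integrable_const assms(3)]) (use AE_Theta that in auto)
    then show ?thesis by (simp add: prob_space)
  qed
  have upper: "(\<integral>x. x \<partial>G) \<le> a" if "\<Theta> \<subseteq> {..a}" for a
  proof -
    have "(\<integral>x. x \<partial>G) \<le> (\<integral>x. a \<partial>G)"
      by (rule integral_mono_AE[OF assms(3) integrable_const]) (use AE_Theta that in auto)
    then show ?thesis by (simp add: prob_space)
  qed
  from assms(1) show ?thesis
    unfolding admissible_Theta_def by (elim disjE exE conjE) (auto intro!: lower upper)
qed

lemma sba_0 [simp]: "sba G \<Theta> r 0 = Inf (ereal ` \<Theta>)"
  by (cases r) auto

lemma sba_top [simp]: "sba G \<Theta> r (2 ^ r) = Sup (ereal ` \<Theta>)"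
  by (cases r) auto

lemma sba_even: "i \<le> 2 ^ j \<Longrightarrow> sba G \<Theta> (Suc j) (2 * i) = sba G \<Theta> j i"
  by (cases "i = 0"; cases "i = 2 ^ j") auto

lemma sba_odd:
  assumes "1 \<le> j"
  shows "sba G \<Theta> (Suc j) (2 * i + 1) = bary G (sba G \<Theta> j i) (sba G \<Theta> j (i + 1))"
proof -
  have "2 * i + 1 \<noteq> 2 ^ Suc j"
    by (metis even_Suc even_mult_iff even_numeral even_power zero_less_Suc Suc_eq_plus1)
  then show ?thesis using assms by auto
qed

lemma sba_mult_power2: "l \<le> 2 ^ r \<Longrightarrow> sba G \<Theta> (r + m) (l * 2 ^ m) = sba G \<Theta> r l"
proof (induction m)
  case (Suc m)
  have "l * 2 ^ m \<le> 2 ^ (r + m)"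
    using Suc.prems by (simp add: power_add)
  then show ?case
    using sba_even[of "l * 2 ^ m" "r + m" G \<Theta>] Suc by (simp add: mult_ac)
qed simp

declare sba.simps(2) [simp del]

lemma sba_mono_Suc:
  assumes "admissible_Theta \<Theta>" and G: "G \<in> Pr \<Theta>" and "integrable G (\<lambda>x. x)"
  shows "l < 2 ^ r \<Longrightarrow> sba G \<Theta> r l \<le> sba G \<Theta> r (Suc l)"
proof (induction r arbitrary: l)
  case 0
  have "Inf (ereal ` \<Theta>) \<le> Sup (ereal ` \<Theta>)"
    using assms(1) by (intro Inf_le_Sup) (auto simp: admissible_Theta_def)
  then show ?case using 0 by simp
next
  case (Suc j l)
  have bary_in_interval: "a1 \<le> a2 \<Longrightarrow> a1 \<le> bary G a1 a2 \<and> bary G a1 a2 \<le> a2" for a1 a2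
    using G assms(3) by (intro bary_between) (auto simp: Pr_def)
  show ?case
  proof (cases "j = 0")
    case True
    have "ereal (\<integral>x. x \<partial>G) \<ge> Inf (ereal ` \<Theta>) \<and> ereal (\<integral>x. x \<partial>G) \<le> Sup (ereal ` \<Theta>)"
      using integral_in_admissible_Theta[OF assms] admissible_Theta_mem_iff[OF assms(1)] by blast
    moreover have "l = 0 \<or> l = 1"
      using Suc.prems True by auto
    ultimately show ?thesis
      using True by (auto simp: sba.simps(2))
  next
    case False
    then have j: "1 \<le> j" by simp
    show ?thesis
    proof (cases "even l")
      case True
      then obtain i where l: "l = 2 * i" ..
      with Suc.prems have i: "i < 2 ^ j" by simp
      show ?thesis
        using l i Suc.IH[OF i] bary_in_interval sba_odd[OF j, of G \<Theta> i] by (simp add: sba_even)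
    next
      case False
      then obtain i where l: "l = 2 * i + 1" using oddE by blast
      with Suc.prems have i: "i < 2 ^ j" by simp
      show ?thesis
        using l i Suc.IH[OF i] bary_in_interval sba_odd[OF j, of G \<Theta> i] sba_even[of "i + 1" j G \<Theta>]
        by simp
    qed
  qed
qed

lemma sba_mono:
  assumes "admissible_Theta \<Theta>" and "G \<in> Pr \<Theta>" and "integrable G (\<lambda>x. x)"
    and "l1 \<le> l2" and "l2 \<le> 2 ^ r"
  shows "sba G \<Theta> r l1 \<le> sba G \<Theta> r l2"
  using assms(4,5)
proof (induction l2 rule: dec_induct)
  case (step k)
  then have "sba G \<Theta> r k \<le> sba G \<Theta> r (Suc k)"
    by (intro sba_mono_Suc[OF assms(1-3)]) simp
  with step show ?case
    by simp
qed simp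

lemma RBC_E:
  assumes "A \<in> RBC n \<Theta>"
  obtains G where "G \<in> Pr \<Theta>" and "integrable G (\<lambda>x. x)" and "regular_sba G \<Theta> n"
    and "\<And>r i. 1 \<le> r \<Longrightarrow> r \<le> n + 1 \<Longrightarrow> 1 \<le> i \<Longrightarrow> i \<le> 2 ^ r - 1 \<Longrightarrow>
           ereal (A (r, i)) = sba G \<Theta> r i"
  using assms unfolding RBC_def idx_def by fastforce

lemma RBC_row_mono:
  assumes "A \<in> RBC n \<Theta>" and "admissible_Theta \<Theta>"
    and "1 \<le> r" "r \<le> n + 1" and "1 \<le> i" "i \<le> i'" "i' \<le> 2 ^ r - 1"
  shows "A (r, i) \<le> A (r, i')"
proof -
  obtain G where G: "G \<in> Pr \<Theta>" "integrable G (\<lambda>x. x)"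
    and A_eq: "\<And>r i. 1 \<le> r \<Longrightarrow> r \<le> n + 1 \<Longrightarrow> 1 \<le> i \<Longrightarrow> i \<le> 2 ^ r - 1 \<Longrightarrow>
      ereal (A (r, i)) = sba G \<Theta> r i"
    using RBC_E[OF assms(1)] by metis
  have "sba G \<Theta> r i \<le> sba G \<Theta> r i'"
    by (rule sba_mono[OF assms(2) G]) (use assms(6,7) in auto)
  then have "ereal (A (r, i)) \<le> ereal (A (r, i'))"
    using A_eq[of r i] A_eq[of r i'] assms(3-7) by simp
  then show ?thesis
    by simp
qed

lemma RBC_in_Theta:
  assumes "A \<in> RBC n \<Theta>" and "admissible_Theta \<Theta>"
    and "1 \<le> r" "r \<le> n + 1" and "1 \<le> i" "i \<le> 2 ^ r - 1"
  shows "A (r, i) \<in> \<Theta>"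
proof -
  obtain G where G: "G \<in> Pr \<Theta>" "integrable G (\<lambda>x. x)"
    and A_eq: "\<And>r i. 1 \<le> r \<Longrightarrow> r \<le> n + 1 \<Longrightarrow> 1 \<le> i \<Longrightarrow> i \<le> 2 ^ r - 1 \<Longrightarrow>
      ereal (A (r, i)) = sba G \<Theta> r i"
    using RBC_E[OF assms(1)] by metis
  have "sba G \<Theta> r 0 \<le> sba G \<Theta> r i" and "sba G \<Theta> r i \<le> sba G \<Theta> r (2 ^ r)"
    by (rule sba_mono[OF assms(2) G]; use assms(6) in auto)+
  then have "Inf (ereal ` \<Theta>) \<le> ereal (A (r, i)) \<and> ereal (A (r, i)) \<le> Sup (ereal ` \<Theta>)"
    using A_eq[OF assms(3-6)] by simp
  then show ?thesis
    using admissible_Theta_mem_iff[OF assms(2)] by blast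
qed

text \<open>Row \<open>r \<le> n\<close> reappears in the regular row \<open>n\<close>, at the positions \<open>k 2\<^sup>n\<^sup>-\<^sup>r\<close>.\<close>
lemma RBC_row_distinct:
  assumes "A \<in> RBC n \<Theta>" and "1 \<le> r" "r \<le> n"
    and "1 \<le> i" "i < 2 ^ r" "1 \<le> i'" "i' < 2 ^ r" "i \<noteq> i'"
  shows "A (r, i) \<noteq> A (r, i')"
proof -
  obtain G where regular: "regular_sba G \<Theta> n"
    and A_eq: "\<And>r i. 1 \<le> r \<Longrightarrow> r \<le> n + 1 \<Longrightarrow> 1 \<le> i \<Longrightarrow> i \<le> 2 ^ r - 1 \<Longrightarrow>
      ereal (A (r, i)) = sba G \<Theta> r i"
    using RBC_E[OF assms(1)] by metis
  define m where "m = n - r"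
  have n_eq: "n = r + m"
    using assms(3) by (simp add: m_def)
  have sba_eq: "sba G \<Theta> r k = sba G \<Theta> n (k * 2 ^ m)" if "k < 2 ^ r" for k
    using sba_mult_power2[of k r G \<Theta> m] that n_eq by simp
  have index_bounds: "1 \<le> k * 2 ^ m \<and> k * 2 ^ m \<le> 2 ^ n - 1" if "1 \<le> k" "k < 2 ^ r" for k :: nat
  proof -
    have "k * 2 ^ m < 2 ^ n"
      using that(2) n_eq by (simp add: power_add)
    moreover have "0 < k * 2 ^ m"
      using that(1) by simp
    ultimately show ?thesis
      by linarith
  qed
  have distinct: "sba G \<Theta> n (i * 2 ^ m) \<noteq> sba G \<Theta> n (i' * 2 ^ m)"
    using regular index_bounds[of i] index_bounds[of i'] assms(4-8)
    unfolding regular_sba_def by auto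
  have A_eq_row_n: "ereal (A (r, k)) = sba G \<Theta> n (k * 2 ^ m)" if "1 \<le> k" "k < 2 ^ r" for k
    using A_eq[of r k] sba_eq[of k] that assms(2,3) by simp
  have "ereal (A (r, i)) \<noteq> ereal (A (r, i'))"
    using distinct A_eq_row_n[of i] A_eq_row_n[of i'] assms(4-7) by simp
  then show ?thesis
    by simp
qed

section \<open>The weights of \<open>T\<^sub>n\<close>\<close>

text \<open>The ratio in the formula for \<open>F(\<mu>\<^sub>j\<^sub>+\<^sub>1\<^sub>,\<^sub>2\<^sub>i\<^sub>+\<^sub>1)\<close>, i.e.\ its case \<open>l = i + 1\<close>.\<close>
definition Fv_ratio :: "(nat \<times> nat \<Rightarrow> real) \<Rightarrow> nat \<Rightarrow> nat \<Rightarrow> real" where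
  "Fv_ratio A j i =
     qt (A (j + 2, 4 * i + 3) - A (j + 2, 4 * i + 2)) (A (j + 2, 4 * i + 3) - A (j + 2, 4 * i + 1))"

lemma qt_between: "0 \<le> a \<Longrightarrow> a \<le> b \<Longrightarrow> 0 \<le> qt a b \<and> qt a b \<le> 1"
  unfolding qt_def by auto

lemma Fv_0 [simp]: "Fv A j 0 = 0"
  by (cases j) auto

lemma Fv_top [simp]: "Fv A j (2 ^ j) = 1"
  by (cases j) auto

declare Fv.simps(2) [simp del]

lemma Fv_even: "i \<le> 2 ^ j \<Longrightarrow> Fv A (Suc j) (2 * i) = Fv A j i"
  by (cases "i = 0"; cases "i = 2 ^ j") (auto simp: Fv.simps(2))

lemma Fv_odd: "Fv A (Suc j) (2 * i + 1) = Fv A j i + (Fv A j (i + 1) - Fv A j i) * Fv_ratio A j i"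
proof -
  have "2 * i + 1 \<noteq> 2 ^ Suc j"
    by (metis even_Suc even_mult_iff even_numeral even_power zero_less_Suc Suc_eq_plus1)
  moreover have "4 * (i + 1) - 1 = 4 * i + 3" "4 * (i + 1) - 2 = 4 * i + 2" "4 * (i + 1) - 3 = 4 * i + 1"
    by simp_all
  ultimately show ?thesis
    by (simp add: Fv.simps(2) Fv_ratio_def Let_def add.commute)
qed

lemma Fv_ratio_between:
  assumes "A \<in> RBC n \<Theta>" and "admissible_Theta \<Theta>" and "j + 1 \<le> n" and "i < 2 ^ j"
  shows "0 \<le> Fv_ratio A j i \<and> Fv_ratio A j i \<le> 1"
proof -
  have "4 * i + 3 \<le> 2 ^ (j + 2) - 1"
    using assms(4) by (simp add: power_add)
  then have "A (j + 2, 4 * i + 1) \<le> A (j + 2, 4 * i + 2)" "A (j + 2, 4 * i + 2) \<le> A (j + 2, 4 * i + 3)"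
    using RBC_row_mono[OF assms(1,2), of "j + 2"] assms(3) by simp_all
  then show ?thesis
    unfolding Fv_ratio_def by (intro qt_between) simp_all
qed

lemma Fv_mono_Suc:
  assumes "A \<in> RBC n \<Theta>" and "admissible_Theta \<Theta>"
  shows "j \<le> n \<Longrightarrow> l < 2 ^ j \<Longrightarrow> Fv A j l \<le> Fv A j (Suc l)"
proof (induction j arbitrary: l)
  case (Suc j l)
  obtain i where l: "l = 2 * i \<or> l = 2 * i + 1"
    by (metis oddE evenE)
  with Suc.prems have i: "i < 2 ^ j" by auto
  have "0 \<le> Fv A j (i + 1) - Fv A j i"
    using Suc.IH[OF _ i] Suc.prems by simp
  moreover have "0 \<le> Fv_ratio A j i \<and> Fv_ratio A j i \<le> 1"
    using Fv_ratio_between[OF assms _ i] Suc.prems by simp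
  ultimately have "0 \<le> (Fv A j (i + 1) - Fv A j i) * Fv_ratio A j i"
    and "(Fv A j (i + 1) - Fv A j i) * Fv_ratio A j i \<le> Fv A j (i + 1) - Fv A j i"
    by (simp_all add: mult_left_le)
  then show ?case
    using l i Fv_odd[of A j i] Fv_even[of i j A] Fv_even[of "i + 1" j A] by auto
qed simp

lemma wts_nonneg:
  assumes "A \<in> RBC n \<Theta>" and "admissible_Theta \<Theta>" and "l \<in> {1..2 ^ n}"
  shows "0 \<le> wts n A l"
proof -
  have "l - 1 < 2 ^ n" and "Suc (l - 1) = l"
    using assms(3) by auto
  then show ?thesis
    using Fv_mono_Suc[OF assms(1,2), of n "l - 1"] by (simp add: wts_def)
qed

lemma sum_wts: "(\<Sum>l\<in>{1..2 ^ n}. wts n A l) = 1"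
  using sum_telescope''[of 0 "2 ^ n" "Fv A n"] by (simp add: wts_def)

lemma Tn_in_Pr:
  assumes "A \<in> RBC n \<Theta>" and "admissible_Theta \<Theta>"
  shows "Tn n A \<in> Pr \<Theta>"
  unfolding Tn_eq_atomic_measure
proof (rule atomic_measure_in_Pr)
  show "(\<lambda>l. A (n + 1, 2 * l - 1)) ` {1..2 ^ n} \<subseteq> \<Theta>"
    using RBC_in_Theta[OF assms, of "n + 1"] by auto
  show "\<Theta> \<in> sets borel"
    using assms(2) by (auto simp: admissible_Theta_def)
qed (use wts_nonneg[OF assms] sum_wts in auto)

lemma
  assumes "A \<in> RBC n \<Theta>" and "admissible_Theta \<Theta>" and "continuous_on UNIV f"
  shows integral_Tn: "(\<integral>x. f x \<partial>Tn n A) = (\<Sum>l\<in>{1..2 ^ n}. wts n A l * f (A (n + 1, 2 * l - 1)))"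
    and integrable_Tn: "integrable (Tn n A) f"
proof -
  have nonneg: "\<And>l. l \<in> {1..2 ^ n} \<Longrightarrow> 0 \<le> wts n A l"
    using wts_nonneg[OF assms(1,2)] .
  have measurable: "f \<in> borel_measurable borel"
    using assms(3) by (rule borel_measurable_continuous_onI)
  show "(\<integral>x. f x \<partial>Tn n A) = (\<Sum>l\<in>{1..2 ^ n}. wts n A l * f (A (n + 1, 2 * l - 1)))"
    unfolding Tn_eq_atomic_measure by (rule integral_atomic_measure[OF _ nonneg measurable]) simp
  show "integrable (Tn n A) f"
    unfolding Tn_eq_atomic_measure by (rule integrable_atomic_measure[OF _ nonneg measurable]) simp
qed

section \<open>Continuity of the integrals against \<open>T\<^sub>n\<close>\<close>

lemma tendsto_qt_mult_null:
  fixes \<alpha> \<beta> \<gamma> d :: "'a \<Rightarrow> real"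
  assumes "eventually (\<lambda>s. \<alpha> s \<le> \<beta> s \<and> \<beta> s \<le> \<gamma> s) F" and "(d \<longlongrightarrow> 0) F"
  shows "((\<lambda>s. qt (\<gamma> s - \<beta> s) (\<gamma> s - \<alpha> s) * d s) \<longlongrightarrow> 0) F"
proof (rule Lim_null_comparison)
  show "eventually (\<lambda>s. norm (qt (\<gamma> s - \<beta> s) (\<gamma> s - \<alpha> s) * d s) \<le> \<bar>d s\<bar>) F"
    using assms(1)
  proof eventually_elim
    case (elim s)
    then have "0 \<le> qt (\<gamma> s - \<beta> s) (\<gamma> s - \<alpha> s) \<and> qt (\<gamma> s - \<beta> s) (\<gamma> s - \<alpha> s) \<le> 1"
      by (intro qt_between) auto
    then show ?case
      by (simp add: abs_mult mult_left_le_one_le)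
  qed
  show "((\<lambda>s. \<bar>d s\<bar>) \<longlongrightarrow> 0) F"
    using tendsto_rabs[OF assms(2)] by simp
qed

lemma tendsto_qt_diff:
  fixes \<alpha> \<beta> \<gamma> :: "'a \<Rightarrow> real"
  assumes "(\<alpha> \<longlongrightarrow> a) F" "(\<beta> \<longlongrightarrow> b) F" "(\<gamma> \<longlongrightarrow> c) F" and "a \<noteq> c"
  shows "((\<lambda>s. qt (\<gamma> s - \<beta> s) (\<gamma> s - \<alpha> s)) \<longlongrightarrow> qt (c - b) (c - a)) F"
proof -
  have quotient: "((\<lambda>s. (\<gamma> s - \<beta> s) / (\<gamma> s - \<alpha> s)) \<longlongrightarrow> (c - b) / (c - a)) F"
    using assms by (intro tendsto_intros) auto
  have "eventually (\<lambda>s. \<gamma> s - \<alpha> s \<noteq> 0) F"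
    using assms(1,3,4) by (intro tendsto_imp_eventually_ne[where c = "c - a"] tendsto_diff) auto
  then have "eventually (\<lambda>s. (\<gamma> s - \<beta> s) / (\<gamma> s - \<alpha> s) = qt (\<gamma> s - \<beta> s) (\<gamma> s - \<alpha> s)) F"
    by eventually_elim (simp add: qt_def)
  with quotient have "((\<lambda>s. qt (\<gamma> s - \<beta> s) (\<gamma> s - \<alpha> s)) \<longlongrightarrow> (c - b) / (c - a)) F"
    by (rule Lim_transform_eventually)
  then show ?thesis
    using assms(4) by (simp add: qt_def)
qed

text \<open>Where \<open>\<alpha> = \<gamma>\<close> the ratio may jump (e.g.\ \<open>0/0 = 1\<close>), but it stays in \<open>[0, 1]\<close> while
  the other factor tends to \<open>0\<close>.\<close>
lemma continuous_on_qt_mult_diff: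
  fixes \<alpha> \<beta> \<gamma> :: "'a::topological_space \<Rightarrow> real" and f :: "real \<Rightarrow> real"
  assumes "continuous_on S \<alpha>" "continuous_on S \<beta>" "continuous_on S \<gamma>" and "continuous_on UNIV f"
    and between: "\<And>s. s \<in> S \<Longrightarrow> \<alpha> s \<le> \<beta> s \<and> \<beta> s \<le> \<gamma> s"
  shows "continuous_on S (\<lambda>s. qt (\<gamma> s - \<beta> s) (\<gamma> s - \<alpha> s) * (f (\<alpha> s) - f (\<gamma> s)))"
  unfolding continuous_on_def
proof
  fix s0 assume "s0 \<in> S"
  then have lim: "(\<alpha> \<longlongrightarrow> \<alpha> s0) (at s0 within S)" "(\<beta> \<longlongrightarrow> \<beta> s0) (at s0 within S)"
      "(\<gamma> \<longlongrightarrow> \<gamma> s0) (at s0 within S)"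
    using assms(1-3) by (auto simp: continuous_on_def)
  have "isCont f x" for x
    using assms(4) by (simp add: continuous_on_eq_continuous_at)
  then have diff: "((\<lambda>s. f (\<alpha> s) - f (\<gamma> s)) \<longlongrightarrow> f (\<alpha> s0) - f (\<gamma> s0)) (at s0 within S)"
    using lim by (intro tendsto_diff isCont_tendsto_compose[where g = f])
  show "((\<lambda>s. qt (\<gamma> s - \<beta> s) (\<gamma> s - \<alpha> s) * (f (\<alpha> s) - f (\<gamma> s))) \<longlongrightarrow>
      qt (\<gamma> s0 - \<beta> s0) (\<gamma> s0 - \<alpha> s0) * (f (\<alpha> s0) - f (\<gamma> s0))) (at s0 within S)"
  proof (cases "\<alpha> s0 = \<gamma> s0")
    case True
    have "eventually (\<lambda>s. s \<in> S) (at s0 within S)"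
      by (simp add: eventually_at_filter)
    then have "eventually (\<lambda>s. \<alpha> s \<le> \<beta> s \<and> \<beta> s \<le> \<gamma> s) (at s0 within S)"
      by (rule eventually_mono) (rule between)
    with diff True show ?thesis
      by (simp add: tendsto_qt_mult_null)
  next
    case False
    show ?thesis
      using tendsto_qt_diff[OF lim False] diff by (rule tendsto_mult)
  qed
qed

lemma continuous_on_coordinate [continuous_intros]:
  "continuous_on S (\<lambda>x :: 'i \<Rightarrow> 'b::topological_space. x i)"
  by (rule continuous_on_subset[OF continuous_on_product_coordinates]) simp

lemma continuous_on_Fv_ratio:
  assumes "j + 2 \<le> n" and "i < 2 ^ j"
  shows "continuous_on (RBC n \<Theta>) (\<lambda>A. Fv_ratio A j i)"
proof -
  have "4 * i + 3 < 2 ^ (j + 2)"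
    using assms(2) by (simp add: power_add)
  then have nonzero: "A (j + 2, 4 * i + 3) - A (j + 2, 4 * i + 1) \<noteq> 0" if "A \<in> RBC n \<Theta>" for A
    using RBC_row_distinct[OF that, of "j + 2" "4 * i + 3" "4 * i + 1"] assms(1) by simp
  have "continuous_on (RBC n \<Theta>) (\<lambda>A. (A (j + 2, 4 * i + 3) - A (j + 2, 4 * i + 2)) /
      (A (j + 2, 4 * i + 3) - A (j + 2, 4 * i + 1)))"
    using nonzero by (intro continuous_intros) auto
  then show ?thesis
    by (rule continuous_on_eq) (use nonzero in \<open>auto simp: Fv_ratio_def qt_def\<close>)
qed

lemma continuous_on_Fv:
  "j + 1 \<le> n \<Longrightarrow> l \<le> 2 ^ j \<Longrightarrow> continuous_on (RBC n \<Theta>) (\<lambda>A. Fv A j l)"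
proof (induction j arbitrary: l)
  case (Suc j l)
  show ?case
  proof (cases "even l")
    case True
    then obtain i where l: "l = 2 * i" ..
    with Suc.prems have "i \<le> 2 ^ j" by simp
    then show ?thesis
      using Suc.IH[of i] Suc.prems l by (simp add: Fv_even)
  next
    case False
    then obtain i where l: "l = 2 * i + 1" using oddE by blast
    with Suc.prems have i: "i < 2 ^ j" by simp
    have "continuous_on (RBC n \<Theta>) (\<lambda>A. Fv A j i + (Fv A j (i + 1) - Fv A j i) * Fv_ratio A j i)"
      using Suc.IH[of i] Suc.IH[of "i + 1"] continuous_on_Fv_ratio[of j n i \<Theta>] Suc.prems i
      by (intro continuous_intros) auto
    then show ?thesis
      unfolding l Fv_odd .
  qed
qed simp

lemma sum_in_pairs_from_1:
  fixes g :: "nat \<Rightarrow> 'a::comm_monoid_add"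
  shows "(\<Sum>l\<in>{1..2 * N}. g l) = (\<Sum>i<N. g (2 * i + 1) + g (2 * i + 2))"
proof (induction N)
  case (Suc N)
  have "{1..2 * Suc N} = insert (2 * N + 2) (insert (2 * N + 1) {1..2 * N})"
    by auto
  then show ?case
    using Suc by (simp add: ac_simps)
qed simp

text \<open>Pairing the atoms of \<open>T\<^sub>m\<^sub>+\<^sub>1\<close> that share a parent interval of level \<open>m\<close>.\<close>
lemma sum_wts_Suc_mult:
  assumes "n = Suc m"
  shows "(\<Sum>l\<in>{1..2 ^ n}. wts n A l * f (A (n + 1, 2 * l - 1))) =
   (\<Sum>i<2 ^ m. (Fv A m (i + 1) - Fv A m i) *
      (f (A (m + 2, 4 * i + 3)) + Fv_ratio A m i * (f (A (m + 2, 4 * i + 1)) - f (A (m + 2, 4 * i + 3)))))"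
proof -
  have "(\<Sum>l\<in>{1..2 ^ n}. wts n A l * f (A (n + 1, 2 * l - 1))) =
      (\<Sum>i<2 ^ m. wts n A (2 * i + 1) * f (A (n + 1, 2 * (2 * i + 1) - 1)) +
                 wts n A (2 * i + 2) * f (A (n + 1, 2 * (2 * i + 2) - 1)))"
    using sum_in_pairs_from_1[of "\<lambda>l. wts n A l * f (A (n + 1, 2 * l - 1))" "2 ^ m"] assms
    by simp
  also have "\<dots> = (\<Sum>i<2 ^ m. (Fv A m (i + 1) - Fv A m i) *
      (f (A (m + 2, 4 * i + 3)) + Fv_ratio A m i * (f (A (m + 2, 4 * i + 1)) - f (A (m + 2, 4 * i + 3)))))"
  proof (rule sum.cong)
    fix i :: nat
    assume "i \<in> {..<2 ^ m}"
    then have i: "i < 2 ^ m" by simp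
    have w_odd: "wts n A (2 * i + 1) = (Fv A m (i + 1) - Fv A m i) * Fv_ratio A m i"
      unfolding wts_def assms using Fv_odd[of A m i] Fv_even[of i m A] i by simp
    have "wts n A (2 * i + 2) = Fv A m (i + 1) - (Fv A m i + (Fv A m (i + 1) - Fv A m i) * Fv_ratio A m i)"
      unfolding wts_def assms using Fv_odd[of A m i] Fv_even[of "i + 1" m A] i by simp
    then have w_even: "wts n A (2 * i + 2) = (Fv A m (i + 1) - Fv A m i) * (1 - Fv_ratio A m i)"
      by (simp add: algebra_simps)
    have indices: "n + 1 = m + 2" "2 * (2 * i + 1) - 1 = 4 * i + 1" "2 * (2 * i + 2) - 1 = 4 * i + 3"
      using assms by simp_all
    show "wts n A (2 * i + 1) * f (A (n + 1, 2 * (2 * i + 1) - 1)) +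
        wts n A (2 * i + 2) * f (A (n + 1, 2 * (2 * i + 2) - 1)) =
      (Fv A m (i + 1) - Fv A m i) *
        (f (A (m + 2, 4 * i + 3)) + Fv_ratio A m i * (f (A (m + 2, 4 * i + 1)) - f (A (m + 2, 4 * i + 3))))"
      unfolding w_odd w_even indices by (simp add: algebra_simps)
  qed simp
  finally show ?thesis .
qed

lemma continuous_on_coordinate_compose:
  "continuous_on UNIV f \<Longrightarrow> continuous_on S (\<lambda>x :: 'i \<Rightarrow> 'b::topological_space. f (x i))"
  by (rule continuous_on_compose2[OF _ continuous_on_coordinate]) auto

lemma continuous_on_paired_atoms:
  fixes f :: "real \<Rightarrow> real"
  assumes "admissible_Theta \<Theta>" and f: "continuous_on UNIV f" and "n = Suc m" and "i < 2 ^ m"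
  shows "continuous_on (RBC n \<Theta>) (\<lambda>A. (Fv A m (i + 1) - Fv A m i) *
    (f (A (m + 2, 4 * i + 3)) + Fv_ratio A m i * (f (A (m + 2, 4 * i + 1)) - f (A (m + 2, 4 * i + 3)))))"
proof -
  have "4 * i + 3 \<le> 2 ^ (m + 2) - 1"
    using assms(4) by (simp add: power_add)
  then have "A (m + 2, 4 * i + 1) \<le> A (m + 2, 4 * i + 2) \<and> A (m + 2, 4 * i + 2) \<le> A (m + 2, 4 * i + 3)"
    if "A \<in> RBC n \<Theta>" for A
    using RBC_row_mono[OF that assms(1), of "m + 2"] assms(3) by simp
  then have ratio_part: "continuous_on (RBC n \<Theta>)
      (\<lambda>A. Fv_ratio A m i * (f (A (m + 2, 4 * i + 1)) - f (A (m + 2, 4 * i + 3))))"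
    unfolding Fv_ratio_def by (intro continuous_on_qt_mult_diff continuous_on_coordinate f) auto
  have "continuous_on (RBC n \<Theta>) (\<lambda>A. Fv A m (i + 1) - Fv A m i)"
    using continuous_on_Fv[of m n "i + 1" \<Theta>] continuous_on_Fv[of m n i \<Theta>] assms(3,4)
    by (intro continuous_on_diff) auto
  then show ?thesis
    by (intro continuous_on_mult continuous_on_add[OF continuous_on_coordinate_compose[OF f] ratio_part])
qed

lemma continuous_on_integral_Tn:
  fixes f :: "real \<Rightarrow> real"
  assumes "admissible_Theta \<Theta>" and "continuous_on UNIV f"
  shows "continuous_on (RBC n \<Theta>) (\<lambda>A. \<integral>x. f x \<partial>Tn n A)"
proof -
  have "continuous_on (RBC n \<Theta>) (\<lambda>A. \<Sum>l\<in>{1..2 ^ n}. wts n A l * f (A (n + 1, 2 * l - 1)))"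
  proof (cases n)
    case 0
    then show ?thesis
      using continuous_on_coordinate_compose[OF assms(2)] by (simp add: wts_def)
  next
    case (Suc m)
    then show ?thesis
      unfolding sum_wts_Suc_mult[OF Suc]
      by (intro continuous_on_sum continuous_on_paired_atoms[OF assms Suc]) simp
  qed
  then show ?thesis
    by (rule continuous_on_eq) (simp add: integral_Tn[OF _ assms])
qed

section \<open>Topologies generated by integrals\<close>

definition integral_balls :: "real measure set \<Rightarrow> (real \<Rightarrow> real) set \<Rightarrow> real measure set set" where
  "integral_balls P F =
     {{G \<in> P. \<bar>(\<integral>x. f x \<partial>G) - (\<integral>x. f x \<partial>G0)\<bar> < e} | f G0 e. f \<in> F \<and> G0 \<in> P \<and> e > 0}"

lemma weak_top_eq: "weak_top \<Theta> = topology_generated_by (integral_balls (Pr \<Theta>) (Collect bcont))"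
  unfolding weak_top_def integral_balls_def by simp

lemma integral_balls_Un: "integral_balls P (F \<union> F') = integral_balls P F \<union> integral_balls P F'"
  unfolding integral_balls_def by blast

lemma integral_balls_singleton:
  "integral_balls P {h} =
     {{G \<in> P. \<bar>(\<integral>x. h x \<partial>G) - (\<integral>x. h x \<partial>G0)\<bar> < e} | G0 e. G0 \<in> P \<and> e > 0}"
  unfolding integral_balls_def by blast

lemma wass_top_eq:
  "wass_top \<Theta> p =
     topology_generated_by (integral_balls (Pr_p \<Theta> p) (Collect bcont \<union> {\<lambda>x. \<bar>x\<bar> powr p}))"
  unfolding wass_top_def integral_balls_Un integral_balls_singleton
  unfolding integral_balls_def by simp

lemma continuous_map_integral_balls:
  assumes "g ` S \<subseteq> P" and "(\<lambda>_. 0) \<in> F"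
    and "\<And>f. f \<in> F \<Longrightarrow> continuous_on S (\<lambda>s. \<integral>x. f x \<partial>g s)"
  shows "continuous_map (top_of_set S) (topology_generated_by (integral_balls P F)) g"
proof (rule continuous_on_generated_topo)
  fix U assume "U \<in> integral_balls P F"
  then obtain f c e where U: "U = {G \<in> P. \<bar>(\<integral>x. f x \<partial>G) - c\<bar> < e}" and "f \<in> F"
    unfolding integral_balls_def by blast
  have preimage_eq: "g -` U \<inter> topspace (top_of_set S) =
      S \<inter> (\<lambda>s. \<integral>x. f x \<partial>g s) -` {y. \<bar>y - c\<bar> < e}"
    using assms(1) U by auto
  show "openin (top_of_set S) (g -` U \<inter> topspace (top_of_set S))"
    unfolding preimage_eq
    by (rule continuous_openin_preimage_gen[OF assms(3)[OF \<open>f \<in> F\<close>]])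
      (intro open_Collect_less continuous_intros)
next
  have "G \<in> \<Union> (integral_balls P F)" if "G \<in> P" for G
  proof
    show "G \<in> {G' \<in> P. \<bar>(\<integral>x. 0 \<partial>G') - (\<integral>x. 0 \<partial>G)\<bar> < (1::real)}"
      using that by simp
    show "{G' \<in> P. \<bar>(\<integral>x. 0 \<partial>G') - (\<integral>x. 0 \<partial>G)\<bar> < (1::real)} \<in> integral_balls P F"
      unfolding integral_balls_def
      by (intro CollectI exI[of _ "\<lambda>_. 0"] exI[of _ G] exI[of _ "1::real"] conjI refl)
        (use that assms(2) in simp_all)
  qed
  then show "g ` topspace (top_of_set S) \<subseteq> \<Union> (integral_balls P F)"
    using assms(1) by auto
qed

theorem lemma8:
  fixes \<Theta> :: "real set" and n :: nat
  assumes "admissible_Theta \<Theta>"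
  shows "continuous_map (subtopology euclidean (RBC n \<Theta>)) (weak_top \<Theta>) (Tn n) \<and>
         (\<forall>p::real. p \<ge> 1 \<longrightarrow>
           continuous_map (subtopology euclidean (RBC n \<Theta>)) (wass_top \<Theta> p) (Tn n))"
proof (intro conjI allI impI)
  have Tn_Pr: "Tn n ` RBC n \<Theta> \<subseteq> Pr \<Theta>"
    using Tn_in_Pr[OF _ assms] by blast
  have continuous_integral: "continuous_on (RBC n \<Theta>) (\<lambda>A. \<integral>x. f x \<partial>Tn n A)"
    if "continuous_on UNIV f" for f :: "real \<Rightarrow> real"
    using continuous_on_integral_Tn[OF assms that] .
  have bcont_continuous: "continuous_on UNIV f" if "f \<in> Collect bcont" for f
    using that by (simp add: bcont_def)
  have bcont_0: "(\<lambda>_. 0) \<in> Collect bcont"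
    by (simp add: bcont_def)
  show "continuous_map (top_of_set (RBC n \<Theta>)) (weak_top \<Theta>) (Tn n)"
    unfolding weak_top_eq using Tn_Pr bcont_0
    by (rule continuous_map_integral_balls) (rule continuous_integral[OF bcont_continuous])
  fix p :: real
  assume "p \<ge> 1"
  then have powr_continuous: "continuous_on UNIV (\<lambda>x::real. \<bar>x\<bar> powr p)"
    by (intro continuous_on_powr' continuous_intros) auto
  have "Tn n ` RBC n \<Theta> \<subseteq> Pr_p \<Theta> p"
    using Tn_Pr integrable_Tn[OF _ assms powr_continuous] by (auto simp: Pr_p_def)
  moreover have "continuous_on UNIV f" if "f \<in> Collect bcont \<union> {\<lambda>x. \<bar>x\<bar> powr p}" for f
    using that bcont_continuous powr_continuous by blast
  ultimately show "continuous_map (top_of_set (RBC n \<Theta>)) (wass_top \<Theta> p) (Tn n)"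
    unfolding wass_top_eq using bcont_0
    by (intro continuous_map_integral_balls) (auto intro: continuous_integral)
qed

end
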